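(* Let $\mathbf{x}$ be an infinite word over a finite alphabet. Then $\mathrm{rep}(\mathbf{x})=1$ if and only if $\mathrm{dio}(\mathbf{x})=+\infty$, and $\mathrm{rep}(\mathbf{x})=+\infty$ if and only if $\mathrm{dio}(\mathbf{x})=1$. Furthermore, if $1<\mathrm{dio}(\mathbf{x})<+\infty$, then $$\mathrm{rep}(\mathbf{x})=\frac{\mathrm{dio}(\mathbf{x})}{\mathrm{dio}(\mathbf{x})-1}\le\frac{\mathrm{ice}(\mathbf{x})}{\mathrm{ice}(\mathbf{x})-1}$$ (the right-hand side being $+\infty$ if $\mathrm{ice}(\mathbf{x})=1$).
   Context: For $\mathbf{x}=x_1x_2\ldots$, $x_i^j=x_i\cdots x_j$, $r(n,\mathbf{x})=\min\{m\ge1:\ x_i^{i+n-1}=x_{m-n+1}^{m}\text{ for some } 1\le i\le m-n\}$ and $\mathrm{rep}(\mathbf{x})=\liminf_{n\to\infty}r(n,\mathbf{x})/n$. For a finite word $W$ and real $w\ge1$, $W^w$ is the concatenation of $\lfloor w\rfloor$ copies of $W$ followed by the prefix of $W$ of length $\lceil (w-\lfloor w\rfloor)|W|\rceil$. The initial critical exponent $\mathrm{ice}(\mathbf{x})$ is the supremum of the reals $\rho$ for which there are arbitrarily long prefixes $V$ of $\mathbf{x}$ such that $V^\rho$ is a prefix of $\mathbf{x}$. The Diophantine exponent $\mathrm{dio}(\mathbf{x})$ is the supremum of the reals $\rho$ for which there are arbitrarily long prefixes of $\mathbf{x}$ of the form $UV^w$, with $U,V$ finite words and $w$ real, such that $|UV^w|/|UV|\ge\rho$.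 One has $1\le\mathrm{ice}(\mathbf{x})\le\mathrm{dio}(\mathbf{x})\le+\infty$. *)

theory Defs
  imports "HOL-Analysis.Analysis"
begin

text \<open>Infinite words are functions x :: nat => 'a; the paper's letter x_i (i >= 1)
  is x (i - 1).\<close>

definition fac :: "(nat \<Rightarrow> 'a) \<Rightarrow> nat \<Rightarrow> nat \<Rightarrow> 'a list" where
  "fac x i j = map (\<lambda>k. x (k - 1)) [i..<Suc j]"

definition rfun :: "nat \<Rightarrow> (nat \<Rightarrow> 'a) \<Rightarrow> nat" where
  "rfun n x = (LEAST m. m \<ge> 1 \<and>
     (\<exists>i. 1 \<le> i \<and> i \<le> m - n \<and> fac x i (i + n - 1) = fac x (m - n + 1) m))"

definition rep :: "(nat \<Rightarrow> 'a) \<Rightarrow> ereal" where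
  "rep x = liminf (\<lambda>n. ereal (real (rfun n x) / real n))"

definition wpow :: "'a list \<Rightarrow> real \<Rightarrow> 'a list" where
  "wpow W w = concat (replicate (nat \<lfloor>w\<rfloor>) W)
      @ take (nat \<lceil>(w - of_int \<lfloor>w\<rfloor>) * real (length W)\<rceil>) W"

definition is_prefix :: "'a list \<Rightarrow> (nat \<Rightarrow> 'a) \<Rightarrow> bool" where
  "is_prefix V x \<longleftrightarrow> V = map x [0..<length V]"

definition ice :: "(nat \<Rightarrow> 'a) \<Rightarrow> ereal" where
  "ice x = Sup {ereal \<rho> | \<rho>. \<rho> \<ge> 1 \<and>
     (\<forall>N. \<exists>V. is_prefix V x \<and> length V \<ge> N \<and> is_prefix (wpow V \<rho>) x)}"

definition dio :: "(nat \<Rightarrow> 'a) \<Rightarrow> ereal" where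
  "dio x = Sup {ereal \<rho> | \<rho>. \<rho> \<ge> 1 \<and>
     (\<forall>N. \<exists>U V w. w \<ge> 1 \<and> is_prefix (U @ wpow V w) x \<and> length (U @ wpow V w) \<ge> N \<and>
        real (length (U @ wpow V w)) / real (length (U @ V)) \<ge> \<rho>)}"

end

theory Submission
  imports Defs
begin

text \<open>A prefix \<open>UV\<^sup>w\<close> of \<open>x\<close> with \<open>|UV\<^sup>w| / |UV| \<ge> \<rho>\<close> shows that the factor of length
  \<open>n = |UV\<^sup>w| - |UV|\<close> ending at position \<open>|UV\<^sup>w|\<close> already occurs \<open>|V|\<close> letters earlier, so
  \<open>r(n, x) \<le> |UV\<^sup>w|\<close> and \<open>r(n, x) / n \<le> \<rho> / (\<rho> - 1)\<close>. Conversely, the first repetition of a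
  factor of length \<open>n\<close> turns the prefix of length \<open>r(n, x)\<close> into such a prefix \<open>UV\<^sup>w\<close> with ratio
  \<open>r(n, x) / (r(n, x) - n)\<close>. Hence the order-reversing involution \<open>\<rho> \<mapsto> \<rho> / (\<rho> - 1)\<close> of
  \<open>[1, \<infinity>]\<close> maps \<open>rep(x)\<close> to \<open>dio(x)\<close>, and the bound in terms of \<open>ice(x)\<close> follows
  from \<open>ice(x) \<le> dio(x)\<close>.\<close>

text \<open>At \<open>r = 1\<close> the quotient \<open>r / (r - 1)\<close> is already \<open>\<infinity>\<close>, as \<open>inverse 0 = \<infinity>\<close> for extended reals.\<close>

definition conj_exponent :: "ereal \<Rightarrow> ereal" where
  "conj_exponent r = (if r = \<infinity> then 1 else r / (r - 1))"

lemma conj_exponent_one [simp]: "conj_exponent 1 = \<infinity>"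
  by (simp add: conj_exponent_def)

lemma conj_exponent_infinity [simp]: "conj_exponent \<infinity> = 1"
  by (simp add: conj_exponent_def)

lemma conj_exponent_ereal:
  assumes "1 < a"
  shows "conj_exponent (ereal a) = ereal (a / (a - 1))"
proof -
  have "ereal a - 1 = ereal (a - 1)"
    by (simp add: one_ereal_def)
  then show ?thesis
    using assms by (simp add: conj_exponent_def)
qed

lemma one_less_divide_diff_one: "1 < (a::real) \<Longrightarrow> 1 < a / (a - 1)"
  by (simp add: less_divide_eq)

lemma ereal_ge_one_cases:
  assumes "1 \<le> r"
  obtains "r = 1" | "r = \<infinity>" | a where "1 < a" "r = ereal a"
proof (cases r)
  case (real a)
  then show ?thesis
    using assms that by (cases "a = 1") (auto simp: one_ereal_def)
qed (use assms that in auto)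

lemma one_le_conj_exponent:
  assumes "1 \<le> r"
  shows "1 \<le> conj_exponent r"
  using assms
  by (cases rule: ereal_ge_one_cases)
     (auto simp: conj_exponent_ereal one_less_divide_diff_one less_imp_le)

lemma conj_exponent_conj_exponent:
  assumes "1 \<le> r"
  shows "conj_exponent (conj_exponent r) = r"
  using assms
proof (cases rule: ereal_ge_one_cases)
  case (3 a)
  have "a / (a - 1) / (a / (a - 1) - 1) = a"
    using \<open>1 < a\<close> by (simp add: field_simps)
  then show ?thesis
    using 3 by (simp add: conj_exponent_ereal one_less_divide_diff_one)
qed simp_all

lemma conj_exponent_antimono:
  assumes "1 \<le> r" "r \<le> s"
  shows "conj_exponent s \<le> conj_exponent r"
proof -
  have "1 \<le> s" using assms by simp
  then show ?thesis
  proof (cases rule: ereal_ge_one_cases)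
    case 1 then show ?thesis using assms by (simp add: antisym)
  next
    case 2 then show ?thesis using one_le_conj_exponent[OF \<open>1 \<le> r\<close>] by simp
  next
    case (3 b)
    show ?thesis
      using \<open>1 \<le> r\<close>
    proof (cases rule: ereal_ge_one_cases)
      case (3 a)
      then have "b / (b - 1) \<le> a / (a - 1)"
        using \<open>r \<le> s\<close> \<open>s = ereal b\<close> by (simp add: field_simps)
      then show ?thesis using 3 \<open>1 < b\<close> \<open>s = ereal b\<close> by (simp add: conj_exponent_ereal)
    qed (use 3 assms in simp_all)
  qed
qed

lemma conj_exponent_le_iff:
  assumes "1 \<le> r" "1 \<le> s"
  shows "r \<le> conj_exponent s \<longleftrightarrow> s \<le> conj_exponent r"
  by (metis assms conj_exponent_antimono conj_exponent_conj_exponent one_le_conj_exponent)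

lemma conj_exponent_less_iff:
  assumes "1 \<le> r" "1 \<le> s"
  shows "r < conj_exponent s \<longleftrightarrow> s < conj_exponent r"
  by (metis assms conj_exponent_antimono conj_exponent_conj_exponent one_le_conj_exponent not_le)

lemma conj_exponent_eq_infinity_iff:
  assumes "1 \<le> r"
  shows "conj_exponent r = \<infinity> \<longleftrightarrow> r = 1"
  by (metis assms conj_exponent_conj_exponent conj_exponent_infinity conj_exponent_one)

lemma conj_exponent_eq_one_iff:
  assumes "1 \<le> r"
  shows "conj_exponent r = 1 \<longleftrightarrow> r = \<infinity>"
  by (metis assms conj_exponent_conj_exponent conj_exponent_infinity conj_exponent_one)

lemma Sup_ereal_eq_threshold:
  fixes S :: "real set" and c :: ereal
  assumes "1 \<in> S" "\<And>\<rho>. \<rho> \<in> S \<Longrightarrow> 1 \<le> \<rho>" "1 \<le> c"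
    and below: "\<And>\<rho>. 1 < \<rho> \<Longrightarrow> ereal \<rho> < c \<Longrightarrow> \<rho> \<in> S"
    and above: "\<And>\<rho>. 1 < \<rho> \<Longrightarrow> \<rho> \<in> S \<Longrightarrow> ereal \<rho> \<le> c"
  shows "Sup (ereal ` S) = c"
proof (rule antisym)
  show "Sup (ereal ` S) \<le> c"
  proof (rule Sup_least, clarify)
    fix \<rho> assume "\<rho> \<in> S"
    then show "ereal \<rho> \<le> c"
      using assms(2)[of \<rho>] assms(3) above[of \<rho>] by (cases "\<rho> = 1") (auto simp: one_ereal_def)
  qed
  show "c \<le> Sup (ereal ` S)"
  proof (rule dense_le)
    fix y assume "y < c"
    show "y \<le> Sup (ereal ` S)"
    proof (cases "y \<le> 1")
      case True
      then show ?thesis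
        using \<open>1 \<in> S\<close> by (metis SUP_upper2 one_ereal_def)
    next
      case False
      then obtain \<rho> where "y = ereal \<rho>" "1 < \<rho>"
        using \<open>y < c\<close> by (cases y) (auto simp: one_ereal_def)
      then show ?thesis
        using below \<open>y < c\<close> by (simp add: SUP_upper)
    qed
  qed
qed

lemma Liminf_le_if_frequently:
  fixes f :: "'b \<Rightarrow> 'a :: complete_linorder"
  assumes "\<exists>\<^sub>F n in F. f n \<le> c"
  shows "Liminf F f \<le> c"
proof (rule ccontr)
  assume "\<not> Liminf F f \<le> c"
  then have "\<forall>\<^sub>F n in F. c < f n"
    by (intro less_LiminfD) simp
  then show False
    using assms by (simp add: frequently_def eventually_mono not_le)
qed

lemma frequently_less_if_Liminf_less:
  fixes f :: "'b \<Rightarrow> 'a :: complete_linorder"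
  assumes "Liminf F f < c"
  shows "\<exists>\<^sub>F n in F. f n < c"
proof (rule ccontr)
  assume "\<not> (\<exists>\<^sub>F n in F. f n < c)"
  then have "\<forall>\<^sub>F n in F. c \<le> f n"
    by (simp add: not_frequently not_less)
  then have "c \<le> Liminf F f"
    by (rule Liminf_bounded)
  then show False
    using assms by simp
qed

lemma nth_concat_replicate:
  "k < q * length V \<Longrightarrow> concat (replicate q V) ! k = V ! (k mod length V)"
proof (induction q arbitrary: k)
  case (Suc q)
  show ?case
  proof (cases "k < length V")
    case False
    then have "concat (replicate (Suc q) V) ! k = concat (replicate q V) ! (k - length V)"
      by (simp add: nth_append)
    also have "\<dots> = V ! ((k - length V) mod length V)"
      using Suc False by (intro Suc.IH) auto
    finally show ?thesis
      using False by (simp add: le_mod_geq)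
  qed (simp add: nth_append)
qed simp

lemma wpow_tail_le: "nat \<lceil>(w - of_int \<lfloor>w\<rfloor>) * real n\<rceil> \<le> n"
proof -
  have "(w - of_int \<lfloor>w\<rfloor>) * real n \<le> real n"
    by (rule mult_left_le_one_le) linarith+
  then show ?thesis
    by (simp add: ceiling_le_iff nat_le_iff)
qed

lemma length_wpow:
  "length (wpow V w) = nat \<lfloor>w\<rfloor> * length V + nat \<lceil>(w - of_int \<lfloor>w\<rfloor>) * real (length V)\<rceil>"
  using wpow_tail_le[of w "length V"]
  by (simp add: wpow_def length_concat sum_list_replicate min_absorb2)

lemma nth_wpow:
  assumes "k < length (wpow V w)"
  shows "wpow V w ! k = V ! (k mod length V)"
proof -
  define q where "q = nat \<lfloor>w\<rfloor>"
  have len: "length (concat (replicate q V)) = q * length V"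
    by (simp add: length_concat sum_list_replicate)
  have "length (wpow V w) \<le> q * length V + length V"
    unfolding length_wpow q_def by (rule add_left_mono[OF wpow_tail_le])
  then have "k < q * length V + length V"
    using assms by linarith
  show ?thesis
  proof (cases "k < q * length V")
    case True
    then show ?thesis
      unfolding wpow_def q_def[symmetric] by (simp add: nth_append len nth_concat_replicate)
  next
    case False
    define t where "t = nat \<lceil>(w - of_int \<lfloor>w\<rfloor>) * real (length V)\<rceil>"
    have "k - q * length V < t"
      using assms False by (simp add: length_wpow q_def t_def)
    moreover have "k mod length V = k - q * length V"
    proof -
      have "k = (k - q * length V) + length V * q"
        using False by simp
      then have "k mod length V = (k - q * length V) mod length V"
        by (metis mod_mult_self2)
      moreover have "k - q * length V < length V"
        using False \<open>k < q * length V + length V\<close> by linarith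
      ultimately show ?thesis
        by simp
    qed
    ultimately show ?thesis
      using False unfolding wpow_def q_def[symmetric] t_def[symmetric]
      by (simp add: nth_append len)
  qed
qed

lemma length_wpow_ge:
  assumes "0 \<le> w"
  shows "w * real (length V) \<le> real (length (wpow V w))"
proof -
  have "w * real (length V) = of_int \<lfloor>w\<rfloor> * real (length V) + (w - of_int \<lfloor>w\<rfloor>) * real (length V)"
    by (simp add: algebra_simps)
  also have "\<dots> \<le> real (nat \<lfloor>w\<rfloor> * length V) + real (nat \<lceil>(w - of_int \<lfloor>w\<rfloor>) * real (length V)\<rceil>)"
    using assms by (intro add_mono) auto
  finally show ?thesis
    by (simp add: length_wpow)
qed

lemma length_wpow_div:
  assumes "0 < length V"
  shows "length (wpow V (real m / real (length V))) = m"
proof -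
  define p where "p = length V"
  have fl: "\<lfloor>real m / real p\<rfloor> = int (m div p)"
    by (rule floor_divide_of_nat_eq)
  have "real m = real p * real (m div p) + real (m mod p)"
    by (metis div_mult_mod_eq mult.commute of_nat_add of_nat_mult)
  then have "(real m / real p - real (m div p)) * real p = real (m mod p)"
    using assms by (simp add: p_def field_simps)
  then show ?thesis
    using fl by (simp add: length_wpow p_def[symmetric] mult.commute[of "m div p"])
qed

lemma wpow_one [simp]: "wpow V 1 = V"
  by (simp add: wpow_def)

lemma is_prefix_nth: "is_prefix P x \<Longrightarrow> k < length P \<Longrightarrow> x k = P ! k"
  unfolding is_prefix_def by (metis add_0 diff_zero nth_map_upt)

lemma is_prefixI: "(\<And>k. k < length P \<Longrightarrow> P ! k = x k) \<Longrightarrow> is_prefix P x"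
  unfolding is_prefix_def by (rule nth_equalityI) auto

lemma is_prefix_map: "is_prefix (map x [0..<n]) x"
  by (simp add: is_prefix_def)

definition periodic_factor :: "(nat \<Rightarrow> 'a) \<Rightarrow> nat \<Rightarrow> nat \<Rightarrow> nat \<Rightarrow> bool" where
  "periodic_factor x a p n \<longleftrightarrow> (\<forall>t<n. x (a + t + p) = x (a + t))"

lemma periodic_factor_mod:
  assumes "periodic_factor x a p n" "0 < p" "s < p + n"
  shows "x (a + s) = x (a + s mod p)"
  using assms(3)
proof (induction s rule: less_induct)
  case (less s)
  show ?case
  proof (cases "s < p")
    case False
    then have "s - p < n"
      using less.prems by linarith
    then have "x (a + (s - p) + p) = x (a + (s - p))"
      using assms(1) unfolding periodic_factor_def by blast
    then have "x (a + s) = x (a + (s - p))"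
      using False by simp
    also have "\<dots> = x (a + (s - p) mod p)"
      using False less.prems assms(2) by (intro less.IH) auto
    finally show ?thesis
      using False by (simp add: le_mod_geq)
  qed simp
qed

lemma periodic_factor_of_prefix:
  assumes "is_prefix (U @ wpow V w) x"
  shows "periodic_factor x (length U) (length V) (length (wpow V w) - length V)"
  unfolding periodic_factor_def
proof (intro allI impI)
  fix t assume t: "t < length (wpow V w) - length V"
  have "x (length U + t + length V) = wpow V w ! (t + length V)"
    using is_prefix_nth[OF assms, of "length U + (t + length V)"] t
    by (simp add: nth_append add.assoc)
  also have "\<dots> = wpow V w ! t"
    using t by (simp add: nth_wpow)
  also have "\<dots> = x (length U + t)"
    using is_prefix_nth[OF assms, of "length U + t"] t by (simp add: nth_append)
  finally show "x (length U + t + length V) = x (length U + t)" .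
qed

lemma prefix_of_periodic_factor:
  assumes "periodic_factor x a p n" "0 < p"
  defines "U \<equiv> map x [0..<a]" and "V \<equiv> map x [a..<a + p]"
  defines "w \<equiv> real (p + n) / real p"
  shows "is_prefix (U @ wpow V w) x" "length (U @ wpow V w) = a + p + n" "1 \<le> w"
proof -
  have len: "length (wpow V w) = p + n"
    using assms(2) length_wpow_div[of V "p + n"] by (simp add: V_def w_def)
  then show "length (U @ wpow V w) = a + p + n"
    by (simp add: U_def)
  show "1 \<le> w"
    using assms(2) by (simp add: w_def)
  show "is_prefix (U @ wpow V w) x"
  proof (rule is_prefixI)
    fix k assume k: "k < length (U @ wpow V w)"
    show "(U @ wpow V w) ! k = x k"
    proof (cases "k < a")
      case False
      then have "(U @ wpow V w) ! k = V ! ((k - a) mod p)"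
        using k len assms(2) by (simp add: U_def V_def nth_append nth_wpow)
      also have "\<dots> = x (a + (k - a) mod p)"
        using assms(2) by (simp add: V_def)
      also have "\<dots> = x k"
        using periodic_factor_mod[OF assms(1,2), of "k - a"] k len False by (simp add: U_def)
      finally show ?thesis .
    qed (simp add: U_def nth_append)
  qed
qed

lemma fac_shift: "fac x (a + 1) (a + n) = map (\<lambda>t. x (a + t)) [0..<n]"
  unfolding fac_def by (rule nth_equalityI) (simp_all del: upt_Suc)

lemma fac_shift_eq_iff:
  "fac x (a + 1) (a + n) = fac x (a + p + 1) (a + p + n) \<longleftrightarrow> periodic_factor x a p n"
  unfolding fac_shift[of x "a + p"] fac_shift periodic_factor_def
  by (auto simp: map_eq_conv ac_simps)

lemma rfun_eq_Least:
  "rfun n x = (LEAST m. \<exists>a p. 0 < p \<and> periodic_factor x a p n \<and> m = a + p + n)"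
  unfolding rfun_def
proof (intro arg_cong[where f = Least] ext iffI)
  fix m
  assume "1 \<le> m \<and> (\<exists>i\<ge>1. i \<le> m - n \<and> fac x i (i + n - 1) = fac x (m - n + 1) m)"
  then obtain i where i: "1 \<le> i" "i \<le> m - n" "fac x i (i + n - 1) = fac x (m - n + 1) m"
    by blast
  have "fac x (i - 1 + 1) (i - 1 + n) = fac x (i - 1 + (m - n + 1 - i) + 1) (i - 1 + (m - n + 1 - i) + n)"
    using i by simp
  then have "periodic_factor x (i - 1) (m - n + 1 - i) n"
    by (simp only: fac_shift_eq_iff)
  moreover have "0 < m - n + 1 - i" "m = i - 1 + (m - n + 1 - i) + n"
    using i by simp_all
  ultimately show "\<exists>a p. 0 < p \<and> periodic_factor x a p n \<and> m = a + p + n"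
    by (intro exI conjI)
next
  fix m
  assume "\<exists>a p. 0 < p \<and> periodic_factor x a p n \<and> m = a + p + n"
  then obtain a p where ap: "0 < p" "periodic_factor x a p n" "m = a + p + n"
    by blast
  show "1 \<le> m \<and> (\<exists>i\<ge>1. i \<le> m - n \<and> fac x i (i + n - 1) = fac x (m - n + 1) m)"
  proof (intro conjI exI[of _ "a + 1"])
    show "fac x (a + 1) (a + 1 + n - 1) = fac x (m - n + 1) m"
      using ap fac_shift_eq_iff[of x a n p] by simp
  qed (use ap in simp_all)
qed

lemma periodic_factor_exists:
  assumes "finite (range x)"
  obtains a p where "0 < p" "periodic_factor x a p n"
proof -
  let ?f = "\<lambda>i. map (\<lambda>t. x (i + t)) [0..<n]"
  have "range ?f \<subseteq> {l. set l \<subseteq> range x \<and> length l = n}"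
    by auto
  then have "finite (range ?f)"
    using finite_lists_length_eq[OF assms] finite_subset by blast
  then have "\<not> inj ?f"
    using finite_imageD infinite_UNIV_nat by blast
  then obtain i j :: nat where "i \<noteq> j" "?f i = ?f j"
    unfolding inj_def by blast
  then obtain i j :: nat where ij: "i < j" "?f i = ?f j"
    by (metis linorder_neq_iff)
  have "periodic_factor x i (j - i) n"
    unfolding periodic_factor_def
  proof (intro allI impI)
    fix t assume "t < n"
    then have "x (j + t) = x (i + t)"
      using ij(2) by (simp add: map_eq_conv)
    then show "x (i + t + (j - i)) = x (i + t)"
      using ij(1) by (simp add: add.commute)
  qed
  then show ?thesis
    using that[of "j - i" i] ij(1) by simp
qed

lemma rfun_attained:
  assumes "finite (range x)"
  obtains a p where "0 < p" "periodic_factor x a p n" "rfun n x = a + p + n"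
proof -
  define P where "P m \<longleftrightarrow> (\<exists>a p. 0 < p \<and> periodic_factor x a p n \<and> m = a + p + n)" for m
  obtain a p where "0 < p" "periodic_factor x a p n"
    using periodic_factor_exists[OF assms] .
  then have "P (a + p + n)"
    unfolding P_def by blast
  then have "P (Least P)"
    by (rule LeastI)
  moreover have "rfun n x = Least P"
    unfolding rfun_eq_Least P_def ..
  ultimately show ?thesis
    using that unfolding P_def by auto
qed

lemma rfun_le:
  assumes "periodic_factor x a p n" "0 < p"
  shows "rfun n x \<le> a + p + n"
  unfolding rfun_eq_Least by (rule Least_le) (use assms in blast)

lemma one_le_rep:
  assumes "finite (range x)"
  shows "1 \<le> rep x"
  unfolding rep_def
proof (rule Liminf_bounded)
  show "\<forall>\<^sub>F n in sequentially. 1 \<le> ereal (real (rfun n x) / real n)"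
    unfolding eventually_sequentially
  proof (intro exI allI impI)
    fix n :: nat assume "1 \<le> n"
    obtain a p where "0 < p" "rfun n x = a + p + n"
      using rfun_attained[OF assms] .
    then show "1 \<le> ereal (real (rfun n x) / real n)"
      using \<open>1 \<le> n\<close> by simp
  qed
qed

definition dio_admissible :: "(nat \<Rightarrow> 'a) \<Rightarrow> real \<Rightarrow> bool" where
  "dio_admissible x \<rho> \<longleftrightarrow> (\<forall>N. \<exists>U V w. w \<ge> 1 \<and> is_prefix (U @ wpow V w) x \<and>
     length (U @ wpow V w) \<ge> N \<and> real (length (U @ wpow V w)) / real (length (U @ V)) \<ge> \<rho>)"

definition ice_admissible :: "(nat \<Rightarrow> 'a) \<Rightarrow> real \<Rightarrow> bool" where
  "ice_admissible x \<rho> \<longleftrightarrow> (\<forall>N. \<exists>V. is_prefix V x \<and> length V \<ge> N \<and> is_prefix (wpow V \<rho>) x)"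

lemma dio_eq_Sup: "dio x = Sup (ereal ` {\<rho>. 1 \<le> \<rho> \<and> dio_admissible x \<rho>})"
  unfolding dio_def dio_admissible_def by (simp add: setcompr_eq_image)

lemma ice_eq_Sup: "ice x = Sup (ereal ` {\<rho>. 1 \<le> \<rho> \<and> ice_admissible x \<rho>})"
  unfolding ice_def ice_admissible_def by (simp add: setcompr_eq_image)

lemma rfun_le_of_prefix_wpow:
  assumes "is_prefix (U @ wpow V w) x" "length (U @ V) < length (U @ wpow V w)"
  shows "rfun (length (U @ wpow V w) - length (U @ V)) x \<le> length (U @ wpow V w)"
proof -
  have "0 < length V"
    using assms(2) by (cases V) (simp_all add: length_wpow)
  moreover have "periodic_factor x (length U) (length V) (length (U @ wpow V w) - length (U @ V))"
    using periodic_factor_of_prefix[OF assms(1)] by simp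
  ultimately show ?thesis
    using rfun_le assms(2) by fastforce
qed

lemma rep_le_of_dio_admissible:
  assumes "1 < \<rho>" and adm: "dio_admissible x \<rho>"
  shows "rep x \<le> ereal (\<rho> / (\<rho> - 1))"
  unfolding rep_def
proof (rule Liminf_le_if_frequently, unfold frequently_sequentially, intro allI)
  fix N :: nat
  obtain U V w where pre: "is_prefix (U @ wpow V w) x"
    and long: "nat \<lceil>\<rho> * real N / (\<rho> - 1)\<rceil> \<le> length (U @ wpow V w)"
    and ratio: "\<rho> \<le> real (length (U @ wpow V w)) / real (length (U @ V))"
    using adm unfolding dio_admissible_def by blast
  define L where "L = length (U @ wpow V w)"
  define K where "K = length (U @ V)"
  define n where "n = L - K"
  note ratio = ratio[folded L_def K_def]
  have "0 < K"
    using ratio \<open>1 < \<rho>\<close> by (cases "K = 0") simp_all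
  then have LK: "\<rho> * K \<le> L"
    using ratio by (simp add: pos_le_divide_eq)
  then have "K < L"
    using \<open>0 < K\<close> \<open>1 < \<rho>\<close> mult_strict_right_mono[of 1 \<rho> "real K"] by linarith
  then have "rfun n x \<le> L" and n: "real n = real L - real K" and "0 < real n"
    using rfun_le_of_prefix_wpow[OF pre] by (simp_all add: n_def L_def K_def)
  have key: "real L * (\<rho> - 1) \<le> \<rho> * real n"
  proof -
    have "real L * (\<rho> - 1) = \<rho> * real L - real L" "\<rho> * real n = \<rho> * real L - \<rho> * real K"
      by (simp_all add: n algebra_simps)
    then show ?thesis
      using LK by linarith
  qed
  have "\<rho> * real N / (\<rho> - 1) \<le> real L"
    using long unfolding L_def by linarith
  then have "\<rho> * real N \<le> real L * (\<rho> - 1)"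
    using \<open>1 < \<rho>\<close> by (simp add: pos_divide_le_eq)
  then have "\<rho> * real N \<le> \<rho> * real n"
    using key by linarith
  then have "N \<le> n"
    using \<open>1 < \<rho>\<close> by simp
  moreover have "real (rfun n x) / real n \<le> \<rho> / (\<rho> - 1)"
  proof -
    have "real (rfun n x) / real n \<le> real L / real n"
      using \<open>rfun n x \<le> L\<close> \<open>0 < real n\<close> by (simp add: divide_right_mono)
    also have "\<dots> \<le> \<rho> / (\<rho> - 1)"
      using key \<open>0 < real n\<close> \<open>1 < \<rho>\<close> by (simp add: pos_divide_le_eq pos_le_divide_eq mult.commute)
    finally show ?thesis .
  qed
  ultimately show "\<exists>n\<ge>N. ereal (real (rfun n x) / real n) \<le> ereal (\<rho> / (\<rho> - 1))"
    by auto
qed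

lemma dio_admissible_of_rep_less:
  assumes fin: "finite (range x)" and "1 < \<rho>" and less: "rep x < ereal (\<rho> / (\<rho> - 1))"
  shows "dio_admissible x \<rho>"
  unfolding dio_admissible_def
proof
  fix N :: nat
  have "\<exists>n\<ge>max N 1. ereal (real (rfun n x) / real n) < ereal (\<rho> / (\<rho> - 1))"
    using frequently_less_if_Liminf_less[OF less[unfolded rep_def]]
    unfolding frequently_sequentially by blast
  then obtain n where "max N 1 \<le> n" and n: "real (rfun n x) / real n < \<rho> / (\<rho> - 1)"
    by auto
  obtain a p where "0 < p" and per: "periodic_factor x a p n" and R: "rfun n x = a + p + n"
    using rfun_attained[OF fin] .
  define U where "U = map x [0..<a]"
  define V where "V = map x [a..<a + p]"
  define w where "w = real (p + n) / real p"
  have "1 \<le> w" "is_prefix (U @ wpow V w) x" and L: "length (U @ wpow V w) = rfun n x"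
    using prefix_of_periodic_factor[OF per \<open>0 < p\<close>] R by (simp_all add: U_def V_def w_def)
  have K: "length (U @ V) = rfun n x - n"
    using R by (simp add: U_def V_def)
  have "0 < real n" "real n < real (rfun n x)"
    using \<open>max N 1 \<le> n\<close> \<open>0 < p\<close> R by simp_all
  have "real (rfun n x) * (\<rho> - 1) < \<rho> * real n"
    using n \<open>0 < real n\<close> \<open>1 < \<rho>\<close> by (simp add: pos_divide_less_eq pos_less_divide_eq)
  then have "\<rho> \<le> real (rfun n x) / (real (rfun n x) - real n)"
    using \<open>real n < real (rfun n x)\<close> by (simp add: pos_le_divide_eq algebra_simps)
  then have "\<rho> \<le> real (length (U @ wpow V w)) / real (length (U @ V))"
    using L K \<open>real n < real (rfun n x)\<close> by (simp add: of_nat_diff)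
  moreover have "N \<le> length (U @ wpow V w)"
    using L \<open>max N 1 \<le> n\<close> \<open>real n < real (rfun n x)\<close> by simp
  ultimately show "\<exists>U V w. 1 \<le> w \<and> is_prefix (U @ wpow V w) x \<and> N \<le> length (U @ wpow V w) \<and>
      \<rho> \<le> real (length (U @ wpow V w)) / real (length (U @ V))"
    using \<open>1 \<le> w\<close> \<open>is_prefix (U @ wpow V w) x\<close> by blast
qed

lemma ice_admissible_one: "ice_admissible x 1"
  unfolding ice_admissible_def using is_prefix_map by fastforce

lemma dio_admissible_of_ice_admissible:
  assumes "1 \<le> \<rho>" "ice_admissible x \<rho>"
  shows "dio_admissible x \<rho>"
  unfolding dio_admissible_def
proof
  fix N :: nat
  obtain V where "is_prefix V x" "max N 1 \<le> length V" "is_prefix (wpow V \<rho>) x"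
    using assms(2) unfolding ice_admissible_def by blast
  have long: "\<rho> * real (length V) \<le> real (length (wpow V \<rho>))"
    using assms(1) length_wpow_ge[of \<rho> V] by simp
  have "real (length V) \<le> \<rho> * real (length V)"
    using assms(1) mult_right_mono[of 1 \<rho> "real (length V)"] by simp
  then have "N \<le> length (wpow V \<rho>)"
    using long \<open>max N 1 \<le> length V\<close> by linarith
  moreover have "0 < real (length V)"
    using \<open>max N 1 \<le> length V\<close> by linarith
  then have "\<rho> \<le> real (length (wpow V \<rho>)) / real (length V)"
    using long by (simp add: pos_le_divide_eq)
  ultimately show "\<exists>U V w. 1 \<le> w \<and> is_prefix (U @ wpow V w) x \<and> N \<le> length (U @ wpow V w) \<and>
      \<rho> \<le> real (length (U @ wpow V w)) / real (length (U @ V))"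
    using assms(1) \<open>is_prefix (wpow V \<rho>) x\<close> by (intro exI[of _ "[]"] exI[of _ V] exI[of _ \<rho>]) simp
qed

lemma one_le_ice: "1 \<le> ice x"
  unfolding ice_eq_Sup using ice_admissible_one by (intro SUP_upper2[of 1]) auto

lemma ice_le_dio: "ice x \<le> dio x"
  unfolding ice_eq_Sup dio_eq_Sup using dio_admissible_of_ice_admissible
  by (intro SUP_subset_mono) auto

lemma dio_eq_conj_exponent_rep:
  assumes "finite (range x)"
  shows "dio x = conj_exponent (rep x)"
  unfolding dio_eq_Sup
proof (rule Sup_ereal_eq_threshold)
  have rep: "1 \<le> rep x"
    using one_le_rep[OF assms] .
  show "1 \<in> {\<rho>. 1 \<le> \<rho> \<and> dio_admissible x \<rho>}"
    using dio_admissible_of_ice_admissible[OF _ ice_admissible_one] by simp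
  show "1 \<le> conj_exponent (rep x)"
    using one_le_conj_exponent[OF rep] .
  fix \<rho> :: real assume "1 < \<rho>"
  then have conj: "conj_exponent (ereal \<rho>) = ereal (\<rho> / (\<rho> - 1))" and "1 \<le> ereal \<rho>"
    by (simp_all add: conj_exponent_ereal)
  show "\<rho> \<in> {\<rho>. 1 \<le> \<rho> \<and> dio_admissible x \<rho>}" if "ereal \<rho> < conj_exponent (rep x)"
    using that dio_admissible_of_rep_less[OF assms \<open>1 < \<rho>\<close>] \<open>1 < \<rho>\<close>
    by (simp add: conj_exponent_less_iff[OF \<open>1 \<le> ereal \<rho>\<close> rep] conj)
  show "ereal \<rho> \<le> conj_exponent (rep x)" if "\<rho> \<in> {\<rho>. 1 \<le> \<rho> \<and> dio_admissible x \<rho>}"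
    using that rep_le_of_dio_admissible[OF \<open>1 < \<rho>\<close>, of x]
    by (simp add: conj_exponent_le_iff[OF \<open>1 \<le> ereal \<rho>\<close> rep] conj)
qed simp

theorem lemma9p3:
  fixes x :: "nat \<Rightarrow> 'a"
  assumes "finite (range x)"
  shows "(rep x = 1 \<longleftrightarrow> dio x = \<infinity>)
       \<and> (rep x = \<infinity> \<longleftrightarrow> dio x = 1)
       \<and> (1 < dio x \<and> dio x < \<infinity> \<longrightarrow>
            rep x = dio x / (dio x - 1)
            \<and> rep x \<le> (if ice x = 1 then \<infinity> else ice x / (ice x - 1)))"
proof (intro conjI impI)
  have rep: "1 \<le> rep x"
    using one_le_rep[OF assms] .
  have dio: "dio x = conj_exponent (rep x)"
    using dio_eq_conj_exponent_rep[OF assms] .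
  then have rep_eq: "rep x = conj_exponent (dio x)"
    using conj_exponent_conj_exponent[OF rep] by simp
  show "rep x = 1 \<longleftrightarrow> dio x = \<infinity>"
    using dio conj_exponent_eq_infinity_iff[OF rep] by simp
  show "rep x = \<infinity> \<longleftrightarrow> dio x = 1"
    using dio conj_exponent_eq_one_iff[OF rep] by simp
  assume "1 < dio x \<and> dio x < \<infinity>"
  then show "rep x = dio x / (dio x - 1)"
    using rep_eq by (simp add: conj_exponent_def)
  have "ice x < \<infinity>"
    using ice_le_dio \<open>1 < dio x \<and> dio x < \<infinity>\<close> by (meson le_less_trans)
  have "rep x \<le> conj_exponent (ice x)"
    unfolding rep_eq using conj_exponent_antimono[OF one_le_ice ice_le_dio] .
  then show "rep x \<le> (if ice x = 1 then \<infinity> else ice x / (ice x - 1))"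
    using \<open>ice x < \<infinity>\<close> by (simp add: conj_exponent_def)
qed

end
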